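(* Let $G$ be a connected graph with $N$ vertices and maximum degree $\Delta$, let $R$ be a positive integer, and assume $N>\Delta^{4R}+1$. Let $H$ be an operator (not necessarily Hermitian) on the qubits at the vertices of $G$ that has range at most $R$ and satisfies $H|W\rangle=\lambda|W\rangle$ for some $\lambda\in\mathbb{C}$. Then there exist constants $\Omega,\omega\in\mathbb{C}$ and operators $h_X$, indexed by subsets $X$ of vertices with $\mathrm{diam}(X)\le 2R$, each supported in $X$ and satisfying $h_X|W\rangle=h_X|\overline 0\rangle=0$, such that $$H=\Omega I+\omega\sum_i s_i^\dagger s_i+\sum_{X:\mathrm{diam}(X)\le 2R}h_X .$$
   Context: System of $N$ qubits on the vertices of a graph $G$ with local basis $|0\rangle,|1\rangle$. For each vertex $i$, $s_i^\dagger$ acts on $i$ as $s^\dagger|0\rangle=|1\rangle$, $s^\dagger|1\rangle=0$, $s_i=(s_i^\dagger)^\dagger$; $|\overline 0\rangle=|0\rangle^{\otimes N}$. Distances $|\mathbf r_i-\mathbf r_j|$ are graph distances. Every operator has a unique expansion in normal-ordered strings $s^\dagger_{j_1}\cdots s^\dagger_{j_n}s_{k_1}\cdots s_{k_m}$ (the $j$'s pairwise distinct, the $k$'s pairwise distinct, overlaps allowed; the empty string is $I$), whose sites are $\{j_1,\dots,j_n,k_1,\dots,k_m\}$. A string has range $R$, where $R$ is the smallest positive integer with all pairwise distances between its sites $<R$; an operator has range at most $R$ if every string with nonzero coefficient has range at most $R$. For a vertex set $X$, $\mathrm{diam}(X)=1+\max_{i,j\in X}|\mathbf r_i-\mathbf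 r_j|$. An operator is supported in $X$ if it acts as the identity outside $X$. $|W\rangle=N^{-1/2}\sum_i s_i^\dagger|\overline 0\rangle$. *)

theory Defs
  imports Complex_Main "HOL-Library.Function_Algebras"
begin

text \<open>Computational basis states are indexed by the set of vertices in state 1.
  An operator is its matrix: Op S T = <S|Op|T>.\<close>

type_synonym 'v op = "'v set \<Rightarrow> 'v set \<Rightarrow> complex"
type_synonym 'v vec = "'v set \<Rightarrow> complex"

definition edges :: "('v \<Rightarrow> 'v \<Rightarrow> bool) \<Rightarrow> ('v \<times> 'v) set" where
  "edges E = {(a, b). E a b}"

definition simple_graph :: "('v \<Rightarrow> 'v \<Rightarrow> bool) \<Rightarrow> bool" where
  "simple_graph E \<longleftrightarrow> (\<forall>a b. E a b \<longrightarrow> E b a) \<and> (\<forall>a. \<not> E a a)"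

definition connected_graph :: "('v \<Rightarrow> 'v \<Rightarrow> bool) \<Rightarrow> bool" where
  "connected_graph E \<longleftrightarrow> (\<forall>a b. (a, b) \<in> (edges E)\<^sup>*)"

definition gdist :: "('v \<Rightarrow> 'v \<Rightarrow> bool) \<Rightarrow> 'v \<Rightarrow> 'v \<Rightarrow> nat" where
  "gdist E a b = (LEAST n. (a, b) \<in> (edges E) ^^ n)"

definition max_degree :: "('v::finite \<Rightarrow> 'v \<Rightarrow> bool) \<Rightarrow> nat" where
  "max_degree E = Max (range (\<lambda>v. card {u. E v u}))"

definition str_range :: "('v \<Rightarrow> 'v \<Rightarrow> bool) \<Rightarrow> 'v set \<Rightarrow> nat" where
  "str_range E S = (LEAST R. 0 < R \<and> (\<forall>i\<in>S. \<forall>j\<in>S. gdist E i j < R))"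

text \<open>diam X = 1 + max pairwise distance (for X = {} this gives 1; irrelevant).\<close>
definition diam :: "('v \<Rightarrow> 'v \<Rightarrow> bool) \<Rightarrow> 'v set \<Rightarrow> nat" where
  "diam E X = 1 + Sup {gdist E i j | i j. i \<in> X \<and> j \<in> X}"

text \<open>Matrix of the normal-ordered string s^dag_{J} s_{K} (product over J of creations,
  over K of annihilations).\<close>
definition sstr :: "'v set \<Rightarrow> 'v set \<Rightarrow> 'v op" where
  "sstr J K S T = (if K \<subseteq> T \<and> J \<inter> (T - K) = {} \<and> S = (T - K) \<union> J then 1 else 0)"

definition range_le :: "('v::finite \<Rightarrow> 'v \<Rightarrow> bool) \<Rightarrow> nat \<Rightarrow> 'v op \<Rightarrow> bool" where
  "range_le E R H \<longleftrightarrow> (\<exists>c :: 'v set \<Rightarrow> 'v set \<Rightarrow> complex.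
      H = (\<lambda>S T. \<Sum>J\<in>UNIV. \<Sum>K\<in>UNIV. c J K * sstr J K S T) \<and>
      (\<forall>J K. c J K \<noteq> 0 \<longrightarrow> str_range E (J \<union> K) \<le> R))"

definition op_apply :: "'v::finite op \<Rightarrow> 'v vec \<Rightarrow> 'v vec" where
  "op_apply H \<psi> = (\<lambda>S. \<Sum>T\<in>UNIV. H S T * \<psi> T)"

definition id_op :: "'v op" where
  "id_op S T = (if S = T then 1 else 0)"

definition smult_op :: "complex \<Rightarrow> 'v op \<Rightarrow> 'v op" where
  "smult_op a H = (\<lambda>S T. a * H S T)"

text \<open>Supported in X: H = A \<otimes> I on the complement of X.\<close>
definition supported_in :: "'v set \<Rightarrow> 'v op \<Rightarrow> bool" where
  "supported_in X H \<longleftrightarrow> (\<exists>A :: 'v op. \<forall>S T.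
      H S T = (if S - X = T - X then A (S \<inter> X) (T \<inter> X) else 0))"

definition vac :: "'v vec" where
  "vac S = (if S = {} then 1 else 0)"

definition Wstate :: "'v::finite vec" where
  "Wstate S = (if card S = 1 then 1 / complex_of_real (sqrt (real (card (UNIV :: 'v set)))) else 0)"

end

theory Submission
  imports Defs
begin

text \<open>
  Expand H in normal-ordered strings with coefficients c J K. Comparing the coefficients of |S>
  in H|W> = lam|W> gives, for every S,
    sum_k c S {k} + sum_(x in S) c (S - {x}) {} = (if |S| = 1 then lam else 0).
  Coefficients vanish on strings with two sites at distance >= R, and as N exceeds
  max_degree^(4R) + 1 one can always find a vertex far from any short-range string. Adding it to a
  string J turns the equation for J plus that vertex into c J {} = 0 for every nonempty J, which
  in turn fixes the total hopping amplitude sum_k c J {k} to lam - c {} {} for |J| = 1 and to 0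
  otherwise. The strings with at least two annihilators and the differences of single-annihilator
  strings s+_J s_k - s+_J s_j with j in J are supported on their own sites and annihilate both |W>
  and the vacuum; a pure annihilator s_k differs from a fixed s_r by a telescoping sum of
  s_z - s_y over the edges of a path. What is left of H is c {} {} I + (lam - c {} {}) sum_i n_i.
\<close>

section \<open>Graph distance\<close>

lemma gdist_relpow:
  assumes "connected_graph E"
  shows "(a, b) \<in> edges E ^^ gdist E a b"
proof -
  from assms have "\<exists>n. (a, b) \<in> edges E ^^ n"
    by (simp add: connected_graph_def rtrancl_power)
  then show ?thesis unfolding gdist_def by (rule LeastI_ex)
qed

lemma gdist_le: "(a, b) \<in> edges E ^^ n \<Longrightarrow> gdist E a b \<le> n"
  unfolding gdist_def by (rule Least_le)

lemma gdist_self [simp]: "gdist E a a = 0"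
  using gdist_le[where a=a and b=a and n=0] by simp

lemma gdist_eq_0D:
  assumes "connected_graph E" and "gdist E a b = 0"
  shows "b = a"
  using gdist_relpow[OF assms(1), of a b] assms(2) by simp

lemma gdist_edge: "E a b \<Longrightarrow> gdist E a b \<le> 1"
  using gdist_le[where a=a and b=b and n=1] by (simp add: edges_def)

lemma gdist_SucE:
  assumes "connected_graph E" and "gdist E x y = Suc t"
  obtains z where "gdist E x z = t" and "E z y"
proof -
  from gdist_relpow[OF assms(1), of x y] assms(2)
  obtain z where z: "(x, z) \<in> edges E ^^ t" and "(z, y) \<in> edges E"
    by (auto elim: relpow_Suc_E)
  then have zy: "E z y" by (simp add: edges_def)
  have "(x, y) \<in> edges E ^^ Suc (gdist E x z)"
    using gdist_relpow[OF assms(1)] zy by (auto simp: edges_def)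
  then have "t \<le> gdist E x z" using gdist_le[of x y] assms(2) by fastforce
  with gdist_le[OF z] have "gdist E x z = t" by simp
  from this zy show thesis by (rule that)
qed

lemma gdist_intermediate:
  assumes "connected_graph E" and "n \<le> gdist E x y"
  obtains z where "gdist E x z = n"
proof -
  have "\<exists>z. gdist E x z = n" if "gdist E x y = n + m" for m y
    using that
  proof (induction m arbitrary: y)
    case (Suc m)
    then obtain z where "gdist E x z = n + m" by (auto elim: gdist_SucE[OF assms(1)])
    then show ?case by (rule Suc.IH)
  qed auto
  with assms(2) show thesis using that le_Suc_ex by metis
qed

lemma card_neighbours_le_max_degree: "card {u. E v u} \<le> max_degree E"
  unfolding max_degree_def by (rule Max_ge) auto

lemma card_sphere_le:
  fixes E :: "'v::finite \<Rightarrow> 'v \<Rightarrow> bool"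
  assumes "connected_graph E"
  shows "card {y. gdist E x y = t} \<le> max_degree E ^ t"
proof (induction t)
  case 0
  have "{y. gdist E x y = 0} \<subseteq> {x}" using gdist_eq_0D[OF assms] by auto
  then show ?case using card_mono[of "{x}"] by simp
next
  case (Suc t)
  have "{y. gdist E x y = Suc t} \<subseteq> (\<Union>z\<in>{y. gdist E x y = t}. {u. E z u})"
    by (auto elim: gdist_SucE[OF assms])
  then have "card {y. gdist E x y = Suc t} \<le> card (\<Union>z\<in>{y. gdist E x y = t}. {u. E z u})"
    by (intro card_mono) auto
  also have "\<dots> \<le> (\<Sum>z\<in>{y. gdist E x y = t}. card {u. E z u})"
    by (rule card_UN_le) auto
  also have "\<dots> \<le> (\<Sum>z\<in>{y. gdist E x y = t}. max_degree E)"
    by (intro sum_mono card_neighbours_le_max_degree)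
  also have "\<dots> = card {y. gdist E x y = t} * max_degree E" by simp
  also have "\<dots> \<le> max_degree E ^ Suc t" using Suc by simp
  finally show ?case .
qed

lemma card_ball_le:
  fixes E :: "'v::finite \<Rightarrow> 'v \<Rightarrow> bool"
  assumes "connected_graph E"
  shows "card {y. gdist E x y < r} \<le> (\<Sum>t<r. max_degree E ^ t)"
proof -
  have "{y. gdist E x y < r} = (\<Union>t<r. {y. gdist E x y = t})" by auto
  then have "card {y. gdist E x y < r} \<le> (\<Sum>t<r. card {y. gdist E x y = t})"
    by (simp add: card_UN_le)
  also have "\<dots> \<le> (\<Sum>t<r. max_degree E ^ t)" by (intro sum_mono card_sphere_le assms)
  finally show ?thesis .
qed

lemma sum_powers_less_power:
  assumes "(2::nat) \<le> d"
  shows "(\<Sum>t<r. d ^ t) < d ^ r"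
proof (induction r)
  case (Suc r)
  have "(\<Sum>t<Suc r. d ^ t) < 2 * d ^ r" using Suc by simp
  also have "\<dots> \<le> d ^ Suc r" using assms by simp
  finally show ?case .
qed simp

lemma card_ball_less:
  fixes E :: "'v::finite \<Rightarrow> 'v \<Rightarrow> bool"
  assumes "connected_graph E" and "2 \<le> max_degree E"
  shows "card {y. gdist E x y < r} < max_degree E ^ r"
  using card_ball_le[OF assms(1)] sum_powers_less_power[OF assms(2)] by (rule le_less_trans)

lemma far_vertex_exists:
  fixes E :: "'v::finite \<Rightarrow> 'v \<Rightarrow> bool"
  assumes "connected_graph E" and "2 \<le> max_degree E"
    and "card F * max_degree E ^ r < card (UNIV :: 'v set)"
  obtains y where "\<And>x. x \<in> F \<Longrightarrow> r \<le> gdist E x y"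
proof -
  have "card (\<Union>x\<in>F. {y. gdist E x y < r}) \<le> (\<Sum>x\<in>F. card {y. gdist E x y < r})"
    by (rule card_UN_le) simp
  also have "\<dots> \<le> card F * max_degree E ^ r"
    using sum_bounded_above[of F "\<lambda>x. card {y. gdist E x y < r}" "max_degree E ^ r"]
      card_ball_less[OF assms(1,2)] by (simp add: less_imp_le)
  finally have "(\<Union>x\<in>F. {y. gdist E x y < r}) \<noteq> UNIV" using assms(3) by auto
  then obtain y where "y \<notin> (\<Union>x\<in>F. {y. gdist E x y < r})" by blast
  then show thesis by (intro that[of y]) (simp add: not_less)
qed

lemma max_degree_ge_2:
  fixes E :: "'v::finite \<Rightarrow> 'v \<Rightarrow> bool"
  assumes "simple_graph E" and "connected_graph E" and "Suc (max_degree E) < card (UNIV :: 'v set)"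
  shows "2 \<le> max_degree E"
proof -
  fix x :: 'v
  have "card {y. gdist E x y < 2} \<le> Suc (max_degree E)"
    using card_ball_le[OF assms(2), of x 2] by (simp add: numeral_2_eq_2)
  with assms(3) have "{y. gdist E x y < 2} \<noteq> UNIV" by auto
  then obtain y where "\<not> gdist E x y < 2" by auto
  then have "Suc (Suc 0) \<le> gdist E x y" by simp
  then obtain z where "gdist E x z = Suc (Suc 0)" by (rule gdist_intermediate[OF assms(2)])
  then obtain z1 where "gdist E x z1 = Suc 0" and "E z1 z"
    by (auto elim: gdist_SucE[OF assms(2)])
  then obtain z0 where "gdist E x z0 = 0" and "E z0 z1"
    by (auto elim: gdist_SucE[OF assms(2)])
  have "x \<noteq> z" using \<open>gdist E x z = Suc (Suc 0)\<close> by auto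
  moreover have "{x, z} \<subseteq> {u. E z1 u}"
    using \<open>E z1 z\<close> \<open>E z0 z1\<close> gdist_eq_0D[OF assms(2) \<open>gdist E x z0 = 0\<close>] assms(1)
    by (auto simp: simple_graph_def)
  ultimately have "2 \<le> card {u. E z1 u}" using card_mono[of "{u. E z1 u}" "{x, z}"] by simp
  then show ?thesis using card_neighbours_le_max_degree[of E z1] by simp
qed

lemma max_degree_bounds:
  fixes E :: "'v::finite \<Rightarrow> 'v \<Rightarrow> bool"
  assumes "simple_graph E" and "connected_graph E" and "0 < R"
    and "max_degree E ^ (4 * R) + 1 < card (UNIV :: 'v set)"
  shows "2 \<le> max_degree E" and "max_degree E ^ (2 * R) < card (UNIV :: 'v set)"
proof -
  have "max_degree E \<le> max_degree E ^ (4 * R)"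
    using assms(3) by (cases "max_degree E") (simp_all add: self_le_power)
  with assms(4) show degree: "2 \<le> max_degree E"
    using max_degree_ge_2[OF assms(1,2)] by simp
  then have "max_degree E ^ (2 * R) \<le> max_degree E ^ (4 * R)"
    by (intro power_increasing) auto
  with assms(4) show "max_degree E ^ (2 * R) < card (UNIV :: 'v set)" by linarith
qed

lemma str_range_spec:
  fixes E :: "'v::finite \<Rightarrow> 'v \<Rightarrow> bool"
  shows "0 < str_range E S \<and> (\<forall>i\<in>S. \<forall>j\<in>S. gdist E i j < str_range E S)"
proof -
  let ?M = "Max (range (\<lambda>(i, j). gdist E i j))"
  have "gdist E i j \<le> ?M" for i j
    by (rule Max_ge) (auto intro: image_eqI[where x="(i, j)"])
  then have "gdist E i j < Suc ?M" for i j using le_imp_less_Suc by blast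
  then have "\<exists>r. 0 < r \<and> (\<forall>i\<in>S. \<forall>j\<in>S. gdist E i j < r)" by blast
  then show ?thesis unfolding str_range_def by (rule LeastI_ex)
qed

lemma gdist_less_str_range:
  fixes E :: "'v::finite \<Rightarrow> 'v \<Rightarrow> bool"
  shows "i \<in> S \<Longrightarrow> j \<in> S \<Longrightarrow> gdist E i j < str_range E S"
  using str_range_spec by blast

lemma diam_le:
  assumes "0 < r" and "\<And>i j. i \<in> X \<Longrightarrow> j \<in> X \<Longrightarrow> gdist E i j < r"
  shows "diam E X \<le> r"
proof (cases "X = {}")
  case False
  then have "Sup {gdist E i j | i j. i \<in> X \<and> j \<in> X} \<le> r - 1"
    using assms(2) by (intro cSup_least) (blast, fastforce)
  then show ?thesis using assms(1) by (simp add: diam_def)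
qed (use assms(1) in \<open>simp add: diam_def\<close>)

lemma diam_le_str_range:
  fixes E :: "'v::finite \<Rightarrow> 'v \<Rightarrow> bool"
  shows "diam E S \<le> str_range E S"
  using str_range_spec[of E S] by (intro diam_le) auto

lemma diam_edge_le:
  assumes "simple_graph E" and "E y z"
  shows "diam E {y, z} \<le> 2"
proof (rule diam_le)
  have "E z y" using assms by (simp add: simple_graph_def)
  then show "gdist E i j < 2" if "i \<in> {y, z}" and "j \<in> {y, z}" for i j
    using that gdist_edge[of E] assms(2) by fastforce
qed simp

section \<open>Local operators annihilating W and the vacuum\<close>

lemma sum_op_apply: "(\<Sum>i\<in>I. A i) S T = (\<Sum>i\<in>I. A i S T)"
  by (induction I rule: infinite_finite_induct) auto

lemma smult_op_0 [simp]: "smult_op 0 A = 0"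
  by (simp add: smult_op_def fun_eq_iff)

lemma smult_op_sum: "smult_op c (\<Sum>i\<in>I. A i) = (\<Sum>i\<in>I. smult_op c (A i))"
  by (simp add: smult_op_def sum_op_apply sum_distrib_left fun_eq_iff)

lemma sum_card_1:
  fixes f :: "'v::finite set \<Rightarrow> 'b::comm_monoid_add"
  shows "(\<Sum>K\<in>{K. card K = 1}. f K) = (\<Sum>k\<in>UNIV. f {k})"
proof -
  have "{K :: 'v set. card K = 1} = range (\<lambda>k. {k})" by (auto simp: card_1_singleton_iff)
  then show ?thesis by (simp add: sum.reindex)
qed

lemma op_apply_vac: "op_apply A vac S = A S {}"
  unfolding op_apply_def vac_def by (simp add: if_distrib cong: if_cong)

lemma op_apply_Wstate:
  fixes A :: "'v::finite op"
  shows "op_apply A Wstate S =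
    (\<Sum>v\<in>UNIV. A S {v}) / complex_of_real (sqrt (real (card (UNIV :: 'v set))))"
proof -
  have "op_apply A Wstate S =
      (\<Sum>T\<in>{T. card T = 1}. A S T / complex_of_real (sqrt (real (card (UNIV :: 'v set)))))"
    unfolding op_apply_def Wstate_def
    by (simp add: if_distrib sum.inter_filter[of UNIV, symmetric] cong: if_cong)
  also have "\<dots> = (\<Sum>v\<in>UNIV. A S {v} / complex_of_real (sqrt (real (card (UNIV :: 'v set)))))"
    by (rule sum_card_1)
  finally show ?thesis by (simp only: sum_divide_distrib)
qed

lemma sstr_singleton_column:
  "sstr J K S {v} = (if J = S \<and> K = {v} then 1 else 0) + (if v \<in> S \<and> J = S - {v} \<and> K = {} then 1 else 0)"
  by (auto simp: sstr_def subset_singleton_iff)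

lemma sstr_empty_column: "sstr J K S {} = (if J = S \<and> K = {} then 1 else 0)"
  by (auto simp: sstr_def)

lemma sstr_hopping_column: "sstr J {k} S {v} = (if k = v then of_bool (J = S) else 0)"
  by (auto simp: sstr_def)

lemma sstr_empty_empty: "sstr {} {} = id_op"
  by (simp add: sstr_def id_op_def fun_eq_iff)

lemma supported_in_sstr:
  assumes "J \<union> K \<subseteq> X"
  shows "supported_in X (sstr J K)"
  unfolding supported_in_def
proof (intro exI allI)
  fix S T
  show "sstr J K S T = (if S - X = T - X then sstr J K (S \<inter> X) (T \<inter> X) else 0)"
  proof (cases "S - X = T - X")
    case True
    then have "(K \<subseteq> T \<and> J \<inter> (T - K) = {} \<and> S = T - K \<union> J) \<longleftrightarrow>
          (K \<subseteq> T \<inter> X \<and> J \<inter> (T \<inter> X - K) = {} \<and> S \<inter> X = T \<inter> X - K \<union> J)"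
      using assms by blast
    with True show ?thesis by (simp add: sstr_def)
  next
    case False
    then have "S \<noteq> T - K \<union> J" using assms by blast
    with False show ?thesis by (simp add: sstr_def)
  qed
qed

lemma supported_in_pointwise:
  assumes "supported_in X A" and "supported_in X B" and "f 0 0 = 0"
  shows "supported_in X (\<lambda>S T. f (A S T) (B S T))"
proof -
  from assms(1,2) obtain a b where
    "\<forall>S T. A S T = (if S - X = T - X then a (S \<inter> X) (T \<inter> X) else 0)" and
    "\<forall>S T. B S T = (if S - X = T - X then b (S \<inter> X) (T \<inter> X) else 0)"
    unfolding supported_in_def by blast
  with assms(3) show ?thesis
    unfolding supported_in_def by (intro exI[of _ "\<lambda>S T. f (a S T) (b S T)"]) simp
qed

lemma supported_in_zero: "supported_in X 0"
  unfolding supported_in_def by (intro exI[of _ "\<lambda>S T. 0"]) simp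

lemma supported_in_add: "supported_in X A \<Longrightarrow> supported_in X B \<Longrightarrow> supported_in X (A + B)"
  using supported_in_pointwise[of X A B "(+)"] by (simp add: plus_fun_def)

lemma supported_in_diff: "supported_in X A \<Longrightarrow> supported_in X B \<Longrightarrow> supported_in X (A - B)"
  using supported_in_pointwise[of X A B "(-)"] by (simp add: fun_diff_def)

lemma supported_in_smult: "supported_in X A \<Longrightarrow> supported_in X (smult_op c A)"
  using supported_in_pointwise[of X A A "\<lambda>x _. c * x"] by (simp add: smult_op_def)

definition local_term :: "'v::finite set \<Rightarrow> 'v op \<Rightarrow> bool" where
  "local_term X A \<longleftrightarrow>
     supported_in X A \<and> op_apply A Wstate = (\<lambda>_. 0) \<and> op_apply A vac = (\<lambda>_. 0)"

lemma local_term_iff: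
  "local_term X A \<longleftrightarrow> supported_in X A \<and> (\<forall>S. (\<Sum>v\<in>UNIV. A S {v}) = 0) \<and> (\<forall>S. A S {} = 0)"
  by (simp add: local_term_def op_apply_Wstate op_apply_vac fun_eq_iff)

lemma local_term_zero: "local_term X 0"
  by (simp add: local_term_iff supported_in_zero)

lemma local_term_add: "local_term X A \<Longrightarrow> local_term X B \<Longrightarrow> local_term X (A + B)"
  by (simp add: local_term_iff supported_in_add sum.distrib)

lemma local_term_smult: "local_term X A \<Longrightarrow> local_term X (smult_op c A)"
  unfolding local_term_iff by (simp add: supported_in_smult) (simp add: smult_op_def flip: sum_distrib_left)

lemma local_term_sstr:
  assumes "2 \<le> card K" and "J \<union> K \<subseteq> X"
  shows "local_term X (sstr J K)"
proof -
  have "K \<noteq> {}" and "K \<noteq> {v}" for v using assms(1) by auto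
  with assms(2) show ?thesis
    by (simp add: local_term_iff supported_in_sstr sstr_singleton_column sstr_empty_column)
qed

lemma local_term_hopping:
  assumes "J \<union> {k, k'} \<subseteq> X"
  shows "local_term X (sstr J {k} - sstr J {k'})"
  using assms
  by (simp add: local_term_iff supported_in_diff supported_in_sstr sstr_hopping_column
      sstr_empty_column sum_subtractf)

definition local_sum :: "('v::finite \<Rightarrow> 'v \<Rightarrow> bool) \<Rightarrow> nat \<Rightarrow> 'v op \<Rightarrow> bool" where
  "local_sum E R A \<longleftrightarrow> (\<exists>h. (\<forall>X. diam E X \<le> 2 * R \<longrightarrow> local_term X (h X)) \<and>
      A = (\<Sum>X\<in>{X. diam E X \<le> 2 * R}. h X))"

lemma local_sum_zero: "local_sum E R 0"
  unfolding local_sum_def by (intro exI[of _ "\<lambda>_. 0"]) (simp add: local_term_zero)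

lemma local_sum_add:
  assumes "local_sum E R A" and "local_sum E R B"
  shows "local_sum E R (A + B)"
proof -
  from assms obtain a b where
    "\<forall>X. diam E X \<le> 2 * R \<longrightarrow> local_term X (a X)" "A = (\<Sum>X\<in>{X. diam E X \<le> 2 * R}. a X)"
    "\<forall>X. diam E X \<le> 2 * R \<longrightarrow> local_term X (b X)" "B = (\<Sum>X\<in>{X. diam E X \<le> 2 * R}. b X)"
    unfolding local_sum_def by blast
  then show ?thesis
    unfolding local_sum_def by (intro exI[of _ "\<lambda>X. a X + b X"]) (simp add: local_term_add sum.distrib)
qed

lemma local_sum_smult:
  assumes "local_sum E R A"
  shows "local_sum E R (smult_op c A)"
proof -
  from assms obtain a where
    "\<forall>X. diam E X \<le> 2 * R \<longrightarrow> local_term X (a X)" "A = (\<Sum>X\<in>{X. diam E X \<le> 2 * R}. a X)"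
    unfolding local_sum_def by blast
  then show ?thesis
    unfolding local_sum_def
    by (intro exI[of _ "\<lambda>X. smult_op c (a X)"]) (simp add: local_term_smult smult_op_sum)
qed

lemma local_sum_sum:
  "finite I \<Longrightarrow> (\<And>i. i \<in> I \<Longrightarrow> local_sum E R (A i)) \<Longrightarrow> local_sum E R (\<Sum>i\<in>I. A i)"
  by (induction I rule: finite_induct) (auto intro: local_sum_zero local_sum_add)

lemma local_sum_local_term:
  assumes "diam E X \<le> 2 * R" and "local_term X A"
  shows "local_sum E R A"
  unfolding local_sum_def
proof (intro exI[of _ "\<lambda>Y. if Y = X then A else 0"] conjI allI impI)
  show "A = (\<Sum>Y\<in>{X. diam E X \<le> 2 * R}. if Y = X then A else 0)"
    using assms(1) by simp
qed (simp add: assms(2) local_term_zero)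

lemma local_sum_smult_local_term:
  assumes "c \<noteq> 0 \<Longrightarrow> diam E X \<le> 2 * R" and "local_term X A"
  shows "local_sum E R (smult_op c A)"
proof (cases "c = 0")
  case False
  with assms show ?thesis by (intro local_sum_smult local_sum_local_term)
qed (simp add: local_sum_zero)

lemma local_sum_annihilator_diff:
  assumes "simple_graph E" and "connected_graph E" and "0 < R"
  shows "local_sum E R (sstr {} {k} - sstr {} {r})"
proof -
  from assms(2) have "(r, k) \<in> (edges E)\<^sup>*" by (simp add: connected_graph_def)
  then show ?thesis
  proof (induction rule: rtrancl_induct)
    case (step y z)
    then have "diam E {y, z} \<le> 2 * R"
      using diam_edge_le[OF assms(1)] assms(3) by (fastforce simp: edges_def)
    then have "local_sum E R (sstr {} {z} - sstr {} {y})"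
      by (rule local_sum_local_term) (simp add: local_term_hopping)
    from local_sum_add[OF this step.IH] show ?case by (simp only: add_diff_eq diff_add_cancel)
  qed (simp only: diff_self local_sum_zero)
qed

section \<open>Coefficients of an operator with eigenvector W\<close>

lemma normal_expansion_column:
  fixes c :: "'v::finite set \<Rightarrow> 'v set \<Rightarrow> complex"
  shows "(\<Sum>J\<in>UNIV. \<Sum>K\<in>UNIV. c J K * sstr J K S {v}) = c S {v} + (if v \<in> S then c (S - {v}) {} else 0)"
proof -
  have "c J K * sstr J K S {v} = (if K = {v} then (if J = S then c J K else 0) else 0)
      + (if K = {} then (if v \<in> S \<and> J = S - {v} then c J K else 0) else 0)" for J K
    by (auto simp: sstr_def subset_singleton_iff)
  then show ?thesis by (cases "v \<in> S") (simp_all add: sum.distrib)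
qed

lemma W_eigen_column_sum:
  fixes H :: "'v::finite op"
  assumes "op_apply H Wstate = (\<lambda>S. lam * Wstate S)"
  shows "(\<Sum>v\<in>UNIV. H S {v}) = (if card S = 1 then lam else 0)"
proof -
  have "(\<Sum>v\<in>UNIV. H S {v}) / complex_of_real (sqrt (real (card (UNIV :: 'v set)))) = lam * Wstate S"
    using fun_cong[OF assms, of S] by (simp add: op_apply_Wstate)
  moreover have "card (UNIV :: 'v set) \<noteq> 0" by simp
  ultimately show ?thesis by (auto simp: Wstate_def)
qed

text \<open>
  Here a S and b S stand for the coefficients c S {} and sum_k c S {k} of a normal-ordered
  expansion, and coeff_eq is the coefficient of |S> in H|W> for |S| >= 2.
\<close>

context
  fixes E :: "'v::finite \<Rightarrow> 'v \<Rightarrow> bool" and R :: nat and a b :: "'v set \<Rightarrow> 'a::field_char_0"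
  assumes connected: "connected_graph E" and R_pos: "0 < R" and degree: "2 \<le> max_degree E"
    and vertices: "max_degree E ^ (2 * R) < card (UNIV :: 'v set)"
    and coeff_eq: "\<And>S. 2 \<le> card S \<Longrightarrow> b S + (\<Sum>x\<in>S. a (S - {x})) = 0"
    and a_far: "\<And>S i j. i \<in> S \<Longrightarrow> j \<in> S \<Longrightarrow> R \<le> gdist E i j \<Longrightarrow> a S = 0"
    and b_far: "\<And>S i j. i \<in> S \<Longrightarrow> j \<in> S \<Longrightarrow> R \<le> gdist E i j \<Longrightarrow> b S = 0"
begin

lemma short_range_solution_pair:
  assumes "R \<le> gdist E u v"
  shows "a {u} + a {v} = 0"
proof -
  have "u \<noteq> v" using assms R_pos by auto
  moreover have "b {u, v} = 0" using b_far[of u "{u, v}" v] assms by simp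
  ultimately show ?thesis using coeff_eq[of "{u, v}"] by (simp add: insert_Diff_if add.commute)
qed

lemma short_range_solution_singleton: "a {x} = 0"
proof -
  \<comment> \<open>Three pairwise far vertices x, i, j give a {x} = - a {i} = a {j} = - a {x}.\<close>
  have "card {x} * max_degree E ^ R \<le> max_degree E ^ (2 * R)"
    using degree by (simp add: power_increasing)
  with vertices obtain i where "\<And>y. y \<in> {x} \<Longrightarrow> R \<le> gdist E y i"
    by (metis far_vertex_exists[OF connected degree] le_less_trans)
  then have i: "R \<le> gdist E x i" by simp
  have "card {x, i} * max_degree E ^ R \<le> max_degree E * max_degree E ^ R"
    using degree card_insert_le_m1[of 2 "{i}"] by (intro mult_right_mono) (auto simp: card_insert_if)
  also have "\<dots> \<le> max_degree E ^ (2 * R)"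
    using degree R_pos by (simp flip: power_Suc)
  finally obtain j where "\<And>y. y \<in> {x, i} \<Longrightarrow> R \<le> gdist E y j"
    using vertices by (metis far_vertex_exists[OF connected degree] le_less_trans)
  with i have "a {x} + a {i} = 0" and "a {x} + a {j} = 0" and "a {i} + a {j} = 0"
    by (simp_all add: short_range_solution_pair)
  then have "a {i} = - a {x}" and "a {j} = - a {x}" and "a {i} + a {j} = 0"
    by (simp_all add: add_eq_0_iff)
  then show ?thesis by simp
qed

lemma short_range_solution_large:
  assumes "2 \<le> card J"
  shows "a J = 0"
proof (rule ccontr)
  \<comment> \<open>Add a vertex i far from all of J: in the equation for insert i J only a J survives.\<close>
  assume nonzero: "a J \<noteq> 0"
  from assms have "J \<noteq> {}" by auto
  then obtain j0 where j0: "j0 \<in> J" by blast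
  have "J \<subseteq> {y. gdist E j0 y < R}"
  proof
    fix y assume "y \<in> J"
    with a_far[OF j0] nonzero show "y \<in> {y. gdist E j0 y < R}" by (meson mem_Collect_eq not_le)
  qed
  then have "card J \<le> card {y. gdist E j0 y < R}" by (rule card_mono[rotated]) simp
  also have "\<dots> < max_degree E ^ R" by (rule card_ball_less[OF connected degree])
  finally have "card J * max_degree E ^ R \<le> max_degree E ^ R * max_degree E ^ R"
    by (intro mult_right_mono) simp_all
  also have "\<dots> = max_degree E ^ (2 * R)" by (simp flip: power_add mult_2)
  finally have "card J * max_degree E ^ R \<le> max_degree E ^ (2 * R)" .
  with vertices obtain i where far_i: "\<And>y. y \<in> J \<Longrightarrow> R \<le> gdist E y i"
    by (metis far_vertex_exists[OF connected degree] le_less_trans)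
  have "i \<notin> J" using far_i R_pos by force
  have "b (insert i J) = 0" by (rule b_far[of j0 _ i]) (use j0 far_i in auto)
  moreover have "a (insert i J - {x}) = 0" if "x \<in> J" for x
  proof -
    have "card (J - {x}) \<noteq> 0" using assms that by simp
    then have "J - {x} \<noteq> {}" by (metis card.empty)
    then obtain z where "z \<in> J" and "z \<noteq> x" by blast
    then show ?thesis using far_i \<open>i \<notin> J\<close> that by (intro a_far[of z _ i]) auto
  qed
  moreover have "2 \<le> card (insert i J)" using assms \<open>i \<notin> J\<close> by simp
  ultimately have "a J = 0"
    using coeff_eq[of "insert i J"] \<open>i \<notin> J\<close> by (simp add: insert_Diff_if)
  with nonzero show False by contradiction
qed

lemma short_range_solution_vanishes:
  assumes "J \<noteq> {}"
  shows "a J = 0"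
proof -
  from assms have "card J \<noteq> 0" by simp
  then consider "card J = 1" | "2 \<le> card J" by linarith
  then show ?thesis
    by cases (auto simp: card_1_singleton_iff short_range_solution_singleton short_range_solution_large)
qed

end

lemma W_eigenoperator_coeffs:
  fixes E :: "'v::finite \<Rightarrow> 'v \<Rightarrow> bool" and c :: "'v set \<Rightarrow> 'v set \<Rightarrow> complex"
  assumes "connected_graph E" and "0 < R" and "2 \<le> max_degree E"
    and "max_degree E ^ (2 * R) < card (UNIV :: 'v set)"
    and far: "\<And>J K i j. i \<in> J \<union> K \<Longrightarrow> j \<in> J \<union> K \<Longrightarrow> R \<le> gdist E i j \<Longrightarrow> c J K = 0"
    and eigen: "op_apply (\<lambda>S T. \<Sum>J\<in>UNIV. \<Sum>K\<in>UNIV. c J K * sstr J K S T) Wstate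
      = (\<lambda>S. lam * Wstate S)"
  shows "\<And>J. J \<noteq> {} \<Longrightarrow> c J {} = 0"
    and "\<And>J. (\<Sum>k\<in>UNIV. c J {k}) = (if card J = 1 then lam - c {} {} else 0)"
proof -
  have coeff_eq: "(\<Sum>k\<in>UNIV. c S {k}) + (\<Sum>x\<in>S. c (S - {x}) {}) = (if card S = 1 then lam else 0)"
    for S
    using W_eigen_column_sum[OF eigen, of S]
    by (simp add: normal_expansion_column sum.distrib sum.inter_filter[of UNIV, symmetric])
  show creation: "c J {} = 0" if "J \<noteq> {}" for J
  proof (rule short_range_solution_vanishes[OF assms(1-4) _ _ _ that])
    show "(\<Sum>k\<in>UNIV. c S {k}) + (\<Sum>x\<in>S. c (S - {x}) {}) = 0" if "2 \<le> card S" for S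
      using coeff_eq[of S] that by simp
    show "c S {} = 0" if "i \<in> S" and "j \<in> S" and "R \<le> gdist E i j" for S i j
      using far that by blast
    show "(\<Sum>k\<in>UNIV. c S {k}) = 0" if "i \<in> S" and "j \<in> S" and "R \<le> gdist E i j" for S i j
      using far that by (intro sum.neutral) blast
  qed
  show "(\<Sum>k\<in>UNIV. c J {k}) = (if card J = 1 then lam - c {} {} else 0)" for J
  proof -
    have "c (J - {x}) {} = 0" if "x \<in> J" and "card J \<noteq> 1" for x
      using that by (intro creation) (auto simp: card_1_singleton_iff)
    then show ?thesis using coeff_eq[of J] by (auto simp: card_1_singleton_iff eq_diff_eq)
  qed
qed

section \<open>Decomposition into local terms\<close>

text \<open>For J = {} the anchor is an unspecified vertex.\<close>

definition anchor :: "'v set \<Rightarrow> 'v" where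
  "anchor J = (SOME x. x \<in> J)"

text \<open>Shifting every single-annihilator string to the anchor makes each term annihilate W.\<close>

definition normal_remainder :: "('v::finite set \<Rightarrow> 'v set \<Rightarrow> complex) \<Rightarrow> 'v set \<Rightarrow> 'v op" where
  "normal_remainder c J =
     (\<Sum>K\<in>{K. 2 \<le> card K}. smult_op (c J K) (sstr J K))
     + (\<Sum>k\<in>UNIV. smult_op (c J {k}) (sstr J {k} - sstr J {anchor J}))"

lemma sum_split_card:
  fixes f :: "'v::finite set \<Rightarrow> 'b::comm_monoid_add"
  shows "(\<Sum>K\<in>UNIV. f K) = f {} + (\<Sum>k\<in>UNIV. f {k}) + (\<Sum>K\<in>{K. 2 \<le> card K}. f K)"
proof -
  have partition: "(UNIV :: 'v set set) = insert {} ({K. card K = 1} \<union> {K. 2 \<le> card K})"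
    by (auto simp: not_less_eq_eq le_Suc_eq card_eq_0_iff)
  have "(\<Sum>K\<in>UNIV. f K) = f {} + ((\<Sum>K\<in>{K. card K = 1}. f K) + (\<Sum>K\<in>{K. 2 \<le> card K}. f K))"
    unfolding partition by (subst sum.insert) (auto simp: sum.union_disjoint disjoint_iff)
  then show ?thesis by (simp only: sum_card_1 add.assoc)
qed

lemma normal_expansion_split:
  "(\<lambda>S T. \<Sum>J\<in>UNIV. \<Sum>K\<in>UNIV. c J K * sstr J K S T) =
     (\<Sum>J\<in>UNIV. smult_op (c J {}) (sstr J {}))
     + (\<Sum>J\<in>UNIV. smult_op (\<Sum>k\<in>UNIV. c J {k}) (sstr J {anchor J}))
     + (\<Sum>J\<in>UNIV. normal_remainder c J)" (is "_ = ?rhs")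
proof (intro ext)
  fix S T
  have "(\<Sum>K\<in>UNIV. c J K * sstr J K S T) = c J {} * sstr J {} S T
      + (\<Sum>k\<in>UNIV. c J {k}) * sstr J {anchor J} S T + normal_remainder c J S T" for J
    by (simp add: sum_split_card[of "\<lambda>K. c J K * sstr J K S T"] normal_remainder_def sum_op_apply
        smult_op_def right_diff_distrib sum_subtractf sum_distrib_right)
  then show "(\<Sum>J\<in>UNIV. \<Sum>K\<in>UNIV. c J K * sstr J K S T) = ?rhs S T"
    by (simp add: sum_op_apply smult_op_def sum.distrib)
qed

lemma sum_creation_terms:
  fixes f :: "'v::finite set \<Rightarrow> complex"
  assumes "\<And>J. J \<noteq> {} \<Longrightarrow> f J = 0"
  shows "(\<Sum>J\<in>UNIV. smult_op (f J) (sstr J {})) = smult_op (f {}) id_op"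
proof -
  have "(\<Sum>J\<in>UNIV. smult_op (f J) (sstr J {}))
      = smult_op (f {}) (sstr {} {}) + (\<Sum>J\<in>UNIV - {{}}. smult_op (f J) (sstr J {}))"
    by (rule sum.remove) simp_all
  also have "(\<Sum>J\<in>UNIV - {{}}. smult_op (f J) (sstr J {})) = 0"
    using assms by (intro sum.neutral) simp
  finally show ?thesis by (simp add: sstr_empty_empty)
qed

lemma sum_anchor_terms:
  fixes g :: "'v::finite set \<Rightarrow> complex"
  assumes "\<And>J. g J = (if card J = 1 then w else 0)"
  shows "(\<Sum>J\<in>UNIV. smult_op (g J) (sstr J {anchor J})) = smult_op w (\<Sum>i\<in>UNIV. sstr {i} {i})"
proof -
  have "(\<Sum>J\<in>UNIV. smult_op (g J) (sstr J {anchor J}))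
      = (\<Sum>J\<in>{J. card J = 1}. smult_op w (sstr J {anchor J}))"
    unfolding assms by (rule sum.mono_neutral_cong_right) auto
  also have "\<dots> = (\<Sum>i\<in>UNIV. smult_op w (sstr {i} {anchor {i}}))" by (rule sum_card_1)
  also have "\<dots> = smult_op w (\<Sum>i\<in>UNIV. sstr {i} {i})" by (simp add: anchor_def smult_op_sum)
  finally show ?thesis .
qed

lemma local_sum_normal_remainder:
  fixes E :: "'v::finite \<Rightarrow> 'v \<Rightarrow> bool" and c :: "'v set \<Rightarrow> 'v set \<Rightarrow> complex"
  assumes "simple_graph E" and "connected_graph E" and "0 < R"
    and diam: "\<And>J K. c J K \<noteq> 0 \<Longrightarrow> diam E (J \<union> K) \<le> R"
  shows "local_sum E R (normal_remainder c J)"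
proof -
  have "local_sum E R (smult_op (c J K) (sstr J K))" if "2 \<le> card K" for K
    using diam[of J K] that
    by (intro local_sum_smult_local_term[where X = "J \<union> K"] local_term_sstr) auto
  moreover have "local_sum E R (smult_op (c J {k}) (sstr J {k} - sstr J {anchor J}))" for k
  proof (cases "J = {}")
    case True
    then show ?thesis using local_sum_annihilator_diff[OF assms(1-3)] by (simp add: local_sum_smult)
  next
    case False
    then have "anchor J \<in> J" unfolding anchor_def by (simp add: some_in_eq)
    with diam[of J "{k}"] show ?thesis
      by (intro local_sum_smult_local_term[where X = "J \<union> {k}"] local_term_hopping) auto
  qed
  ultimately show ?thesis
    unfolding normal_remainder_def by (intro local_sum_add local_sum_sum) auto
qed

theorem proposition4:
  fixes E :: "'v::finite \<Rightarrow> 'v \<Rightarrow> bool"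
    and R :: nat
    and H :: "'v op"
    and lam :: complex
  assumes "simple_graph E"
    and "connected_graph E"
    and "0 < R"
    and "card (UNIV :: 'v set) > max_degree E ^ (4 * R) + 1"
    and "range_le E R H"
    and "op_apply H Wstate = (\<lambda>S. lam * Wstate S)"
  shows "\<exists>(\<Omega>::complex) (\<omega>::complex) (h :: 'v set \<Rightarrow> 'v op).
           (\<forall>X. diam E X \<le> 2 * R \<longrightarrow>
                supported_in X (h X) \<and> op_apply (h X) Wstate = (\<lambda>_. 0) \<and>
                op_apply (h X) vac = (\<lambda>_. 0)) \<and>
           H = smult_op \<Omega> id_op + smult_op \<omega> (\<Sum>i\<in>UNIV. sstr {i} {i})
               + (\<Sum>X\<in>{X. diam E X \<le> 2 * R}. h X)"
proof -
  obtain c where H: "H = (\<lambda>S T. \<Sum>J\<in>UNIV. \<Sum>K\<in>UNIV. c J K * sstr J K S T)"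
    and c_range: "\<And>J K. c J K \<noteq> 0 \<Longrightarrow> str_range E (J \<union> K) \<le> R"
    using assms(5) unfolding range_le_def by blast
  have far: "c J K = 0" if "i \<in> J \<union> K" and "j \<in> J \<union> K" and "R \<le> gdist E i j" for J K i j
    using c_range[of J K] gdist_less_str_range[OF that(1,2), of E] that(3) by fastforce
  note coeffs = W_eigenoperator_coeffs[OF assms(2,3) max_degree_bounds[OF assms(1-4)] far
      assms(6)[unfolded H]]
  have creation_sum: "(\<Sum>J\<in>UNIV. smult_op (c J {}) (sstr J {})) = smult_op (c {} {}) id_op"
    by (rule sum_creation_terms) (rule coeffs(1))
  have hopping_sum: "(\<Sum>J\<in>UNIV. smult_op (\<Sum>k\<in>UNIV. c J {k}) (sstr J {anchor J}))
      = smult_op (lam - c {} {}) (\<Sum>i\<in>UNIV. sstr {i} {i})"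
    by (rule sum_anchor_terms) (rule coeffs(2))
  have "diam E (J \<union> K) \<le> R" if "c J K \<noteq> 0" for J K
    using diam_le_str_range[of E "J \<union> K"] c_range[OF that] by linarith
  then have "local_sum E R (\<Sum>J\<in>UNIV. normal_remainder c J)"
    by (intro local_sum_sum local_sum_normal_remainder assms(1-3)) auto
  then obtain h where "\<forall>X. diam E X \<le> 2 * R \<longrightarrow> local_term X (h X)"
    and "(\<Sum>J\<in>UNIV. normal_remainder c J) = (\<Sum>X\<in>{X. diam E X \<le> 2 * R}. h X)"
    unfolding local_sum_def by blast
  then show ?thesis
    unfolding H normal_expansion_split creation_sum hopping_sum local_term_def
    by (intro exI[of _ "c {} {}"] exI[of _ "lam - c {} {}"] exI[of _ h]) simp
qed

end
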